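(* For every integer $p\ge1$ and every complex $z$, $$\sum_{n\ge0}\mathcal{B}_{n,p}\frac{z^n}{n!}=p\int_0^1\exp\big((e^z-1)t\big)(1-t)^{p-1}\,dt.$$
   Context: For an integer $p\ge0$, the $p$-Bell numbers $\mathcal{B}_{n,p}$ are defined by $\sum_{n\ge0}\mathcal{B}_{n,p}\frac{z^n}{n!}=\sum_{n\ge0}\binom{n+p}{p}^{-1}\frac{(e^z-1)^n}{n!}$ (the right side is an entire function of $z$, and the left side is its Taylor series at $0$). *)

theory Defs
  imports "HOL-Complex_Analysis.Complex_Analysis"
begin

definition pBell_egf :: "nat \<Rightarrow> complex \<Rightarrow> complex" where
  "pBell_egf p z = (\<Sum>n. (exp z - 1) ^ n / (of_nat ((n + p) choose p) * of_nat (fact n)))"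

text \<open>p-Bell numbers: B_{n,p} = n! times the n-th Taylor coefficient at 0, i.e. the n-th derivative at 0.\<close>
definition pBell :: "nat \<Rightarrow> nat \<Rightarrow> complex" where
  "pBell n p = (deriv ^^ n) (pBell_egf p) 0"

end

theory Submission
  imports Defs
begin

text \<open>Expanding \<open>exp (w t)\<close> and integrating termwise against \<open>(1 - t)^(p-1)\<close> produces Beta
  integrals \<open>n! (p-1)! / (n+p)!\<close>, and \<open>p\<close> times these are exactly the coefficients
  \<open>1 / (binom(n+p,p) n!)\<close> of the series defining the generating function, evaluated at
  \<open>w = e^z - 1\<close>. That series has infinite radius of convergence, so the generating function is
  entire and its Taylor series at \<open>0\<close>, whose coefficients are the \<open>p\<close>-Bell numbers divided
  by \<open>n!\<close>, converges to it everywhere.\<close>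

lemma has_integral_power_mult_one_minus_power:
  "((\<lambda>t::real. t ^ m * (1 - t) ^ k) has_integral (fact m * fact k / fact (m + k + 1))) {0..1}"
  (is "(?f has_integral ?B) _")
proof -
  have "Beta (real m + 1) (real k + 1) = ?B"
    using Gamma_fact[where 'a=real, of m] Gamma_fact[where 'a=real, of k]
      Gamma_fact[where 'a=real, of "m + k + 1"]
    by (simp add: Beta_def add_ac)
  then have "((\<lambda>t. t powr real m * (1 - t) powr real k) has_integral ?B) {0<..<1}"
    using has_integral_Beta_real[of "real m + 1" "real k + 1"]
    by (simp add: has_integral_Icc_iff_Ioo)
  moreover have "(?f has_integral ?B) {0<..<1}
      \<longleftrightarrow> ((\<lambda>t. t powr real m * (1 - t) powr real k) has_integral ?B) {0<..<1}"
    by (rule has_integral_cong) (simp add: powr_realpow)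
  ultimately show ?thesis
    by (simp add: has_integral_Icc_iff_Ioo)
qed

lemma Weierstrass_m_test_integral_sums:
  fixes f :: "nat \<Rightarrow> 'a::ordered_euclidean_space \<Rightarrow> 'b::banach"
  assumes cont: "\<And>n. continuous_on {a..b} (f n)"
    and int: "\<And>n. (f n has_integral I n) {a..b}"
    and bound: "\<And>n x. x \<in> {a..b} \<Longrightarrow> norm (f n x) \<le> M n"
    and "summable M"
  shows "I sums integral {a..b} (\<lambda>x. \<Sum>n. f n x)"
proof -
  have "uniform_limit {a..b} (\<lambda>N x. \<Sum>n<N. f n x) (\<lambda>x. \<Sum>n. f n x) sequentially"
    using bound \<open>summable M\<close> by (rule Weierstrass_m_test)
  moreover have "continuous_on {a..b} (\<lambda>x. \<Sum>n<N. f n x)" for N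
    using cont by (intro continuous_on_sum) auto
  ultimately obtain S J where S: "\<And>N. ((\<lambda>x. \<Sum>n<N. f n x) has_integral S N) {a..b}"
    and "((\<lambda>x. \<Sum>n. f n x) has_integral J) {a..b}" and "S \<longlonglongrightarrow> J"
    by (rule uniform_limit_integral) auto
  moreover have "S = (\<lambda>N. \<Sum>n<N. I n)"
    by (intro ext has_integral_unique[OF S] has_integral_sum finite_lessThan int)
  ultimately show ?thesis
    unfolding sums_def by (simp add: integral_unique)
qed

lemma exp_mult_one_minus_power_integral_sums:
  fixes w :: "'a::{real_normed_field, banach}"
  shows "(\<lambda>n. w ^ n * of_real (fact k / fact (n + k + 1))) sums
           integral {0..1} (\<lambda>t. exp (w * of_real t) * of_real ((1 - t) ^ k))"
proof -
  define f where "f = (\<lambda>n (t::real). w ^ n / fact n * of_real (t ^ n * (1 - t) ^ k))"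
  have "(\<lambda>n. w ^ n * of_real (fact k / fact (n + k + 1))) sums
          integral {0..1} (\<lambda>t. \<Sum>n. f n t)"
  proof (rule Weierstrass_m_test_integral_sums)
    show "continuous_on {0..1} (f n)" for n
      unfolding f_def by (intro continuous_intros)
    have "w ^ n / fact n * of_real (fact n * fact k / fact (n + k + 1))
            = w ^ n * of_real (fact k / fact (n + k + 1))" for n
      by simp
    moreover have "((\<lambda>t. w ^ n / fact n * of_real (t ^ n * (1 - t) ^ k))
            has_integral w ^ n / fact n * of_real (fact n * fact k / fact (n + k + 1))) {0..1}" for n
      by (intro has_integral_mult_right has_integral_of_real has_integral_power_mult_one_minus_power)
    ultimately show "(f n has_integral w ^ n * of_real (fact k / fact (n + k + 1))) {0..1}" for n
      by (simp only: f_def)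
    show "norm (f n t) \<le> norm w ^ n / fact n" if "t \<in> {0..1}" for n t
    proof -
      have "norm (f n t) = norm w ^ n / fact n * \<bar>t ^ n * (1 - t) ^ k\<bar>"
        by (simp only: f_def norm_mult norm_divide norm_power norm_of_real norm_fact)
      also have "\<dots> \<le> norm w ^ n / fact n"
        using that
        by (intro mult_left_le) (auto simp: abs_mult power_abs intro!: mult_le_one power_le_one)
      finally show ?thesis .
    qed
    show "summable (\<lambda>n. norm w ^ n / fact n)"
      using summable_exp[of "norm w"] by (simp add: divide_inverse_commute)
  qed
  moreover have "(\<lambda>n. f n t) sums (exp (w * of_real t) * of_real ((1 - t) ^ k))" for t
  proof -
    have "(\<lambda>n. (w * of_real t) ^ n /\<^sub>R fact n * of_real ((1 - t) ^ k)) sums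
            (exp (w * of_real t) * of_real ((1 - t) ^ k))"
      by (intro sums_mult2 exp_converges)
    then show ?thesis
      by (simp add: f_def scaleR_conv_of_real power_mult_distrib field_simps)
  qed
  ultimately show ?thesis
    by (simp add: sums_iff)
qed

lemma of_nat_mult_fact_pred_div_fact:
  assumes "p \<ge> 1"
  shows "of_nat p * fact (p - 1) / fact (n + p)
           = (1 / (of_nat ((n + p) choose p) * fact n) :: 'a::field_char_0)"
proof -
  have "(fact p :: 'a) = of_nat p * fact (p - 1)"
    using assms by (simp add: fact_reduce)
  moreover have "(of_nat ((n + p) choose p) :: 'a) = fact (n + p) / (fact p * fact n)"
    by (simp add: binomial_fact)
  ultimately show ?thesis
    by simp
qed

lemma pBell_egf_series_sums_integral:
  fixes w :: complex
  assumes "p \<ge> 1"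
  shows "(\<lambda>n. w ^ n / (of_nat ((n + p) choose p) * of_nat (fact n))) sums
           (of_nat p * integral {0..1::real}
              (\<lambda>t. exp (w * of_real t) * of_real ((1 - t) ^ (p - 1))))"
proof -
  have coeff: "of_nat p * (w ^ n * of_real (fact (p - 1) / fact (n + (p - 1) + 1)))
          = w ^ n / (of_nat ((n + p) choose p) * of_nat (fact n))" for n
  proof -
    have "of_nat p * (w ^ n * of_real (fact (p - 1) / fact (n + (p - 1) + 1)))
            = w ^ n * (of_nat p * fact (p - 1) / fact (n + p))"
      using assms by simp
    also have "\<dots> = w ^ n * (1 / (of_nat ((n + p) choose p) * fact n))"
      by (subst of_nat_mult_fact_pred_div_fact[OF assms]) (rule refl)
    finally show ?thesis
      by simp
  qed
  show ?thesis
    using sums_mult[OF exp_mult_one_minus_power_integral_sums[of w "p - 1"], of "of_nat p"]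
    by (simp only: coeff)
qed

lemma pBell_egf_eq_integral:
  assumes "p \<ge> 1"
  shows "pBell_egf p z = of_nat p * integral {0..1::real}
           (\<lambda>t. exp ((exp z - 1) * of_real t) * of_real ((1 - t) ^ (p - 1)))"
  using pBell_egf_series_sums_integral[OF assms, of "exp z - 1"]
  unfolding pBell_egf_def by (simp add: sums_iff)

lemma holomorphic_on_entire_power_series:
  fixes c :: "nat \<Rightarrow> complex"
  assumes "\<And>w. summable (\<lambda>n. c n * w ^ n)"
  shows "(\<lambda>w. \<Sum>n. c n * w ^ n) holomorphic_on A"
  by (rule holomorphic_on_balls_imp_entire'[where c=0], rule power_series_holomorphic[where a=c])
     (use assms in \<open>simp add: summable_sums\<close>)

lemma pBell_egf_holomorphic: "pBell_egf p holomorphic_on A"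
proof -
  define c :: "nat \<Rightarrow> complex"
    where "c n = 1 / (of_nat ((n + p) choose p) * of_nat (fact n))" for n
  have "summable (\<lambda>n. c n * w ^ n)" for w
  proof (rule summable_comparison_test')
    show "summable (\<lambda>n. norm w ^ n / fact n)"
      using summable_exp[of "norm w"] by (simp add: divide_inverse_commute)
    show "norm (c n * w ^ n) \<le> norm w ^ n / fact n" for n
    proof -
      have "norm w ^ n * 1 \<le> norm w ^ n * real ((n + p) choose p)"
        by (intro mult_left_mono) (simp_all add: Suc_le_eq)
      then show ?thesis
        by (simp add: c_def norm_mult norm_divide norm_power field_simps)
    qed
  qed
  then have "((\<lambda>u. \<Sum>n. c n * u ^ n) \<circ> (\<lambda>z. exp z - 1)) holomorphic_on A"
    by (intro holomorphic_on_compose holomorphic_intros holomorphic_on_entire_power_series)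
  moreover have "pBell_egf p = (\<lambda>u. \<Sum>n. c n * u ^ n) \<circ> (\<lambda>z. exp z - 1)"
    by (simp add: fun_eq_iff pBell_egf_def c_def)
  ultimately show ?thesis
    by simp
qed

theorem mainTheorem3:
  fixes p :: nat and z :: complex
  assumes "p \<ge> 1"
  shows "(\<lambda>n. pBell n p * z ^ n / of_nat (fact n)) sums
    (of_nat p * integral {0..1::real}
       (\<lambda>t. exp ((exp z - 1) * of_real t) * of_real ((1 - t) ^ (p - 1))))"
proof -
  have "(\<lambda>n. (deriv ^^ n) (pBell_egf p) 0 / fact n * (z - 0) ^ n) sums pBell_egf p z"
    by (rule holomorphic_power_series[OF pBell_egf_holomorphic, where r = "norm z + 1"])
       (simp add: ball_def)
  then show ?thesis
    unfolding pBell_def pBell_egf_eq_integral[OF assms] by (simp add: field_simps)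
qed

end
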